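(* Let $(\mathcal G,\lambda)$ be a small morphism-colored groupoid satisfying the inverse-compatibility condition, and let $\varpi(\mathcal G,\lambda)=(\bar\lambda,s_1)$ be the morphism-colored functor from $(\mathcal G,\lambda)$ to the discrete morphism-colored category $(\mathcal U(\mathcal G,\lambda),\mathrm{id})$. Then for every category $\mathcal C$ and every morphism-colored functor $(F,\gamma)$ from $(\mathcal G,\lambda)$ to the discrete morphism-colored category $(\mathcal C,\mathrm{id})$, there exists a unique morphism-colored functor $(\check F,\check\gamma)$ from $(\mathcal U(\mathcal G,\lambda),\mathrm{id})$ to $(\mathcal C,\mathrm{id})$ such that $(\check F,\check\gamma)\circ\varpi(\mathcal G,\lambda)=(F,\gamma)$, i.e. $\check F\circ\bar\lambda=F$ and $\check\gamma\circ s_1=\gamma$.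
   Context: A morphism-colored category is a pair $(\mathcal C,\lambda)$ where $\mathcal C$ is a category and $\lambda$ assigns to each morphism $f$ of $\mathcal C$ a "color" $\lambda(f)$, such that: whenever $g,f_1,f_2\in\mathrm{Mor}(\mathcal C)$ with $(f_1,f_2)$ composable satisfy $\lambda(g)=\lambda(f_1\circ f_2)$, there exist composable $g_1,g_2$ with $g=g_1\circ g_2$, $\lambda(g_1)=\lambda(f_1)$, $\lambda(g_2)=\lambda(f_2)$. It is a morphism-colored groupoid if $\mathcal C$ is a groupoid, and small if $\mathcal C$ is small and $\lambda$ is a map into a set. For any category $\mathcal C$, $(\mathcal C,\mathrm{id})$ (each morphism colored by itself) is the discrete morphism-colored category. A morphism-colored functor $(F,\gamma):(\mathcal C,\lambda)\to(\mathcal C',\lambda')$ is a functor $F:\mathcal C\to\mathcal C'$ together with a map $\gamma$ on colors such that $\gamma(\lambda(f))=\lambda'(F(f))$ for every morphism $f$ of $\mathcal C$; composition is $(F',\gamma')\circ(F,\gamma)=(F'\circ F,\gamma'\circ\gamma)$. Standing setup: $(\mathcal G,\lambda)$ small morphism-colored groupoid, $\lambda:\mathrm{Mor}(\mathcal G)\to I$, with inverse-compatibility: $\lambda(f)=\lambda(g)\Rightarrow\lambda(f^{-1})=\lambda(g^{-1})$. $I_1=\lambda(\mathrm{Mor}(\mathcal G))$, $\lambda_1:\mathrm{Mor}(\mathcal G)\to I_1$ the corestriction of $\lambda$; $I_0=\{\lambda(\mathrm{id}_x)\}$, $\lambda_0(x)=\lambda(\mathrm{id}_x)$. The equivalence relation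 $\overset{1}{\sim}$ on $I_1$ is generated by the declaration $\lambda(f_1\circ\cdots\circ f_l)\overset{1}{\sim}\lambda(g_1\circ\cdots\circ g_l)$ for composable sequences with $\lambda(f_i)=\lambda(g_i)$ for all $i$ (this declaration is already an equivalence relation); $s_1:I_1\to\bar I_1$ is the quotient. The equivalence relation $\overset{0}{\sim}$ on $I_0$ is given by $\lambda_0(\mathrm{source}(f))\overset{0}{\sim}\lambda_0(\mathrm{source}(g))$ whenever $(s_1\circ\lambda_1)(f)=(s_1\circ\lambda_1)(g)$; $s_0:I_0\to\bar I_0$ is the quotient. $\mathcal U(\mathcal G,\lambda)$ is the groupoid with objects $\bar I_0$, morphisms $\bar I_1$, source/target of $(s_1\circ\lambda_1)(f)$ equal to $(s_0\circ\lambda_0)$ of source/target of $f$, and composition $(s_1\lambda_1)(f)\circ(s_1\lambda_1)(g)=(s_1\lambda_1)(f\circ g)$. The functor $\bar\lambda:\mathcal G\to\mathcal U(\mathcal G,\lambda)$ is $\bar\lambda(x)=(s_0\circ\lambda_0)(x)$, $\bar\lambda(f)=(s_1\circ\lambda_1)(f)$, and $\varpi(\mathcal G,\lambda):=(\bar\lambda,s_1)$. *)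

theory Defs
  imports Main
begin

record ('o, 'm) cat =
  Obj :: "'o set"
  Mor :: "'m set"
  Dom :: "'m \<Rightarrow> 'o"
  Cod :: "'m \<Rightarrow> 'o"
  Ide :: "'o \<Rightarrow> 'm"
  Comp :: "'m \<Rightarrow> 'm \<Rightarrow> 'm"   (* Comp C f g = f \<circ> g, defined when Dom f = Cod g *)

definition category :: "('o, 'm) cat \<Rightarrow> bool" where
  "category C \<longleftrightarrow>
     (\<forall>f\<in>Mor C. Dom C f \<in> Obj C \<and> Cod C f \<in> Obj C) \<and>
     (\<forall>x\<in>Obj C. Ide C x \<in> Mor C \<and> Dom C (Ide C x) = x \<and> Cod C (Ide C x) = x) \<and>
     (\<forall>f\<in>Mor C. \<forall>g\<in>Mor C. Dom C f = Cod C g \<longrightarrow>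
        Comp C f g \<in> Mor C \<and> Dom C (Comp C f g) = Dom C g \<and> Cod C (Comp C f g) = Cod C f) \<and>
     (\<forall>f\<in>Mor C. Comp C (Ide C (Cod C f)) f = f \<and> Comp C f (Ide C (Dom C f)) = f) \<and>
     (\<forall>f\<in>Mor C. \<forall>g\<in>Mor C. \<forall>h\<in>Mor C. Dom C f = Cod C g \<longrightarrow> Dom C g = Cod C h \<longrightarrow>
        Comp C (Comp C f g) h = Comp C f (Comp C g h))"

definition is_inverse :: "('o, 'm) cat \<Rightarrow> 'm \<Rightarrow> 'm \<Rightarrow> bool" where
  "is_inverse C f g \<longleftrightarrow> g \<in> Mor C \<and> Dom C g = Cod C f \<and> Cod C g = Dom C f \<and>
     Comp C f g = Ide C (Cod C f) \<and> Comp C g f = Ide C (Dom C f)"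

definition groupoid :: "('o, 'm) cat \<Rightarrow> bool" where
  "groupoid C \<longleftrightarrow> category C \<and> (\<forall>f\<in>Mor C. \<exists>g. is_inverse C f g)"

definition inv_mor :: "('o, 'm) cat \<Rightarrow> 'm \<Rightarrow> 'm" where
  "inv_mor C f = (SOME g. is_inverse C f g)"

definition "functor" :: "('o, 'm) cat \<Rightarrow> ('p, 'n) cat \<Rightarrow> ('o \<Rightarrow> 'p) \<Rightarrow> ('m \<Rightarrow> 'n) \<Rightarrow> bool" where
  "functor C D Fo Fm \<longleftrightarrow> category C \<and> category D \<and>
     (\<forall>x\<in>Obj C. Fo x \<in> Obj D) \<and>
     (\<forall>f\<in>Mor C. Fm f \<in> Mor D \<and> Dom D (Fm f) = Fo (Dom C f) \<and> Cod D (Fm f) = Fo (Cod C f)) \<and>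
     (\<forall>x\<in>Obj C. Fm (Ide C x) = Ide D (Fo x)) \<and>
     (\<forall>f\<in>Mor C. \<forall>g\<in>Mor C. Dom C f = Cod C g \<longrightarrow> Fm (Comp C f g) = Comp D (Fm f) (Fm g))"

definition mc_category :: "('o, 'm) cat \<Rightarrow> ('m \<Rightarrow> 'c) \<Rightarrow> bool" where
  "mc_category C lam \<longleftrightarrow> category C \<and>
     (\<forall>g\<in>Mor C. \<forall>f1\<in>Mor C. \<forall>f2\<in>Mor C.
        Dom C f1 = Cod C f2 \<and> lam g = lam (Comp C f1 f2) \<longrightarrow>
        (\<exists>g1\<in>Mor C. \<exists>g2\<in>Mor C. Dom C g1 = Cod C g2 \<and> g = Comp C g1 g2 \<and>
            lam g1 = lam f1 \<and> lam g2 = lam f2))"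

definition mc_groupoid :: "('o, 'm) cat \<Rightarrow> ('m \<Rightarrow> 'c) \<Rightarrow> bool" where
  "mc_groupoid C lam \<longleftrightarrow> mc_category C lam \<and> groupoid C"

definition mc_functor ::
  "('o, 'm) cat \<Rightarrow> ('m \<Rightarrow> 'c) \<Rightarrow> ('p, 'n) cat \<Rightarrow> ('n \<Rightarrow> 'd) \<Rightarrow>
   ('o \<Rightarrow> 'p) \<Rightarrow> ('m \<Rightarrow> 'n) \<Rightarrow> ('c \<Rightarrow> 'd) \<Rightarrow> bool" where
  "mc_functor C lam D lam' Fo Fm gam \<longleftrightarrow>
     mc_category C lam \<and> mc_category D lam' \<and> functor C D Fo Fm \<and>
     (\<forall>f\<in>Mor C. gam (lam f) = lam' (Fm f))"

definition inverse_compatible :: "('o, 'm) cat \<Rightarrow> ('m \<Rightarrow> 'c) \<Rightarrow> bool" where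
  "inverse_compatible G lam \<longleftrightarrow>
     (\<forall>f\<in>Mor G. \<forall>g\<in>Mor G. lam f = lam g \<longrightarrow> lam (inv_mor G f) = lam (inv_mor G g))"

fun comp_list :: "('o, 'm) cat \<Rightarrow> 'm list \<Rightarrow> 'm" where
  "comp_list C [] = undefined"
| "comp_list C [f] = f"
| "comp_list C (f # fs) = Comp C f (comp_list C fs)"

definition composable_seq :: "('o, 'm) cat \<Rightarrow> 'm list \<Rightarrow> bool" where
  "composable_seq C fs \<longleftrightarrow> fs \<noteq> [] \<and> set fs \<subseteq> Mor C \<and>
     (\<forall>i. Suc i < length fs \<longrightarrow> Dom C (fs ! i) = Cod C (fs ! Suc i))"

definition eq_closure :: "'a set \<Rightarrow> 'a rel \<Rightarrow> 'a rel" where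
  "eq_closure A R = Id_on A \<union> (R \<union> R\<inverse>)\<^sup>+"

definition I1 :: "('o, 'm) cat \<Rightarrow> ('m \<Rightarrow> 'c) \<Rightarrow> 'c set" where
  "I1 G lam = lam ` Mor G"

definition lam0 :: "('o, 'm) cat \<Rightarrow> ('m \<Rightarrow> 'c) \<Rightarrow> 'o \<Rightarrow> 'c" where
  "lam0 G lam x = lam (Ide G x)"

definition I0 :: "('o, 'm) cat \<Rightarrow> ('m \<Rightarrow> 'c) \<Rightarrow> 'c set" where
  "I0 G lam = lam0 G lam ` Obj G"

definition rel1_decl :: "('o, 'm) cat \<Rightarrow> ('m \<Rightarrow> 'c) \<Rightarrow> 'c rel" where
  "rel1_decl G lam = {(lam (comp_list G fs), lam (comp_list G gs)) | fs gs.
      composable_seq G fs \<and> composable_seq G gs \<and> length fs = length gs \<and>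
      (\<forall>i<length fs. lam (fs ! i) = lam (gs ! i))}"

definition rel1 :: "('o, 'm) cat \<Rightarrow> ('m \<Rightarrow> 'c) \<Rightarrow> 'c rel" where
  "rel1 G lam = eq_closure (I1 G lam) (rel1_decl G lam)"

definition s1 :: "('o, 'm) cat \<Rightarrow> ('m \<Rightarrow> 'c) \<Rightarrow> 'c \<Rightarrow> 'c set" where
  "s1 G lam c = rel1 G lam `` {c}"

definition rel0_decl :: "('o, 'm) cat \<Rightarrow> ('m \<Rightarrow> 'c) \<Rightarrow> 'c rel" where
  "rel0_decl G lam = {(lam0 G lam (Dom G f), lam0 G lam (Dom G g)) | f g.
      f \<in> Mor G \<and> g \<in> Mor G \<and> s1 G lam (lam f) = s1 G lam (lam g)}"

definition rel0 :: "('o, 'm) cat \<Rightarrow> ('m \<Rightarrow> 'c) \<Rightarrow> 'c rel" where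
  "rel0 G lam = eq_closure (I0 G lam) (rel0_decl G lam)"

definition s0 :: "('o, 'm) cat \<Rightarrow> ('m \<Rightarrow> 'c) \<Rightarrow> 'c \<Rightarrow> 'c set" where
  "s0 G lam c = rel0 G lam `` {c}"

definition lbar_obj :: "('o, 'm) cat \<Rightarrow> ('m \<Rightarrow> 'c) \<Rightarrow> 'o \<Rightarrow> 'c set" where
  "lbar_obj G lam x = s0 G lam (lam0 G lam x)"

definition lbar_mor :: "('o, 'm) cat \<Rightarrow> ('m \<Rightarrow> 'c) \<Rightarrow> 'm \<Rightarrow> 'c set" where
  "lbar_mor G lam f = s1 G lam (lam f)"

text \<open>U(G,lambda): operations defined via (arbitrary) representatives; the paper
  asserts these are independent of the choice.\<close>
definition U :: "('o, 'm) cat \<Rightarrow> ('m \<Rightarrow> 'c) \<Rightarrow> ('c set, 'c set) cat" where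
  "U G lam = \<lparr>
     Obj = I0 G lam // rel0 G lam,
     Mor = I1 G lam // rel1 G lam,
     Dom = (\<lambda>m. lbar_obj G lam (Dom G (SOME f. f \<in> Mor G \<and> lbar_mor G lam f = m))),
     Cod = (\<lambda>m. lbar_obj G lam (Cod G (SOME f. f \<in> Mor G \<and> lbar_mor G lam f = m))),
     Ide = (\<lambda>a. lbar_mor G lam (Ide G (SOME x. x \<in> Obj G \<and> lbar_obj G lam x = a))),
     Comp = (\<lambda>m n. lbar_mor G lam
        (case (SOME (f, g). f \<in> Mor G \<and> g \<in> Mor G \<and> Dom G f = Cod G g \<and>
                lbar_mor G lam f = m \<and> lbar_mor G lam g = n) of (f, g) \<Rightarrow> Comp G f g)) \<rparr>"

end

theory Submission
  imports Defs
begin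

text \<open>
  Call two colours related when they are the colours of composites of two composable
  sequences with the same word of colours. The colouring axiom makes "realizes the word w"
  depend only on the colour of a morphism, and in a groupoid the word of an inverse is the
  reversed word of inverse colours (this is where inverse-compatibility enters); padding with
  k^-1 k shows that this declared relation is already transitive, so it is exactly the
  relation defining the morphisms of U. Related morphisms have identities of equal colour at
  their domains and codomains, so the object relation is trivial and objects of U are just
  identity colours. Hence U is the image of G under a surjection that preserves all the
  structure and lifts composable pairs; such an image is a category, and a functor out of G
  that is constant on the fibres descends uniquely to it. A functor that factors colours
  through gam is constant on related colours, by induction on the common word.
\<close>

section \<open>Categories and groupoids\<close>

locale small_category =
  fixes C :: "('o, 'm) cat"
  assumes category: "category C"
begin

lemma dom_obj: "f \<in> Mor C \<Longrightarrow> Dom C f \<in> Obj C"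
  and cod_obj: "f \<in> Mor C \<Longrightarrow> Cod C f \<in> Obj C"
  using category unfolding category_def by blast+

lemma ide_mor: "x \<in> Obj C \<Longrightarrow> Ide C x \<in> Mor C"
  and dom_ide: "x \<in> Obj C \<Longrightarrow> Dom C (Ide C x) = x"
  and cod_ide: "x \<in> Obj C \<Longrightarrow> Cod C (Ide C x) = x"
  using category unfolding category_def by blast+

lemma
  assumes "f \<in> Mor C" "g \<in> Mor C" "Dom C f = Cod C g"
  shows comp_mor: "Comp C f g \<in> Mor C"
    and dom_comp: "Dom C (Comp C f g) = Dom C g"
    and cod_comp: "Cod C (Comp C f g) = Cod C f"
  using category assms unfolding category_def by blast+

lemma comp_ide_cod: "f \<in> Mor C \<Longrightarrow> Comp C (Ide C (Cod C f)) f = f"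
  and comp_ide_dom: "f \<in> Mor C \<Longrightarrow> Comp C f (Ide C (Dom C f)) = f"
  using category unfolding category_def by blast+

lemma comp_assoc:
  "\<lbrakk>f \<in> Mor C; g \<in> Mor C; h \<in> Mor C; Dom C f = Cod C g; Dom C g = Cod C h\<rbrakk> \<Longrightarrow>
   Comp C (Comp C f g) h = Comp C f (Comp C g h)"
  using category unfolding category_def by blast

end

lemma mc_category_discrete: "category C \<Longrightarrow> mc_category C id"
  unfolding mc_category_def by auto

locale small_groupoid =
  fixes C :: "('o, 'm) cat"
  assumes groupoid: "groupoid C"

sublocale small_groupoid \<subseteq> small_category
  using groupoid by unfold_locales (simp add: groupoid_def)

context small_groupoid
begin

lemma is_inverse_inv_mor: "f \<in> Mor C \<Longrightarrow> is_inverse C f (inv_mor C f)"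
  using groupoid unfolding groupoid_def inv_mor_def by (blast intro: someI_ex)

lemma
  assumes "f \<in> Mor C"
  shows inv_mor_mor: "inv_mor C f \<in> Mor C"
    and dom_inv_mor: "Dom C (inv_mor C f) = Cod C f"
    and cod_inv_mor: "Cod C (inv_mor C f) = Dom C f"
    and comp_inv_mor_right: "Comp C f (inv_mor C f) = Ide C (Cod C f)"
    and comp_inv_mor_left: "Comp C (inv_mor C f) f = Ide C (Dom C f)"
  using is_inverse_inv_mor[OF assms] unfolding is_inverse_def by auto

lemma left_inverse_eq_inv_mor:
  assumes a: "a \<in> Mor C" and b: "b \<in> Mor C" and ab: "Dom C a = Cod C b"
    and left_inverse: "Comp C a b = Ide C (Dom C b)"
  shows "a = inv_mor C b"
proof -
  have "a = Comp C a (Comp C b (inv_mor C b))"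
    using comp_ide_dom[OF a] comp_inv_mor_right[OF b] ab by simp
  also have "\<dots> = Comp C (Comp C a b) (inv_mor C b)"
    using comp_assoc[OF a b inv_mor_mor[OF b]] ab cod_inv_mor[OF b] by simp
  also have "\<dots> = inv_mor C b"
    using left_inverse comp_ide_cod[OF inv_mor_mor[OF b]] cod_inv_mor[OF b] by simp
  finally show ?thesis .
qed

lemma inv_mor_inv_mor: "f \<in> Mor C \<Longrightarrow> inv_mor C (inv_mor C f) = f"
  using left_inverse_eq_inv_mor[OF _ inv_mor_mor, of f f]
  by (simp add: inv_mor_mor dom_inv_mor cod_inv_mor comp_inv_mor_right)

lemma inv_mor_ide: "x \<in> Obj C \<Longrightarrow> inv_mor C (Ide C x) = Ide C x"
  using left_inverse_eq_inv_mor[OF ide_mor ide_mor, of x x] comp_ide_cod[OF ide_mor, of x]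
  by (simp add: dom_ide cod_ide)

lemma inv_mor_comp:
  assumes f: "f \<in> Mor C" and g: "g \<in> Mor C" and fg: "Dom C f = Cod C g"
  shows "inv_mor C (Comp C f g) = Comp C (inv_mor C g) (inv_mor C f)"
proof -
  let ?f' = "inv_mor C f" and ?g' = "inv_mor C g"
  note f' = inv_mor_mor[OF f] dom_inv_mor[OF f] cod_inv_mor[OF f] comp_inv_mor_left[OF f]
  note g' = inv_mor_mor[OF g] dom_inv_mor[OF g] cod_inv_mor[OF g] comp_inv_mor_left[OF g]
  have fg_mor: "Comp C f g \<in> Mor C" using comp_mor[OF f g fg] .
  have "Comp C (Comp C ?g' ?f') (Comp C f g) = Comp C ?g' (Comp C ?f' (Comp C f g))"
    using comp_assoc[OF g'(1) f'(1) fg_mor] f' g' fg cod_comp[OF f g fg] by simp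
  also have "Comp C ?f' (Comp C f g) = Comp C (Comp C ?f' f) g"
    using comp_assoc[OF f'(1) f g] f' fg by simp
  also have "\<dots> = g"
    using comp_ide_cod[OF g] f' fg by simp
  finally have "Comp C (Comp C ?g' ?f') (Comp C f g) = Ide C (Dom C (Comp C f g))"
    using g' dom_comp[OF f g fg] by simp
  moreover have "Dom C (Comp C ?g' ?f') = Cod C (Comp C f g)"
    using dom_comp[OF g'(1) f'(1)] f' g' fg cod_comp[OF f g fg] by simp
  ultimately show ?thesis
    using left_inverse_eq_inv_mor[OF comp_mor[OF g'(1) f'(1)] fg_mor] f' g' fg by simp
qed

end

section \<open>Images of categories\<close>

locale category_image =
  fixes G :: "('o, 'm) cat" and D :: "('p, 'n) cat"
    and Po :: "'o \<Rightarrow> 'p" and Pm :: "'m \<Rightarrow> 'n"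
  assumes category_source: "category G"
    and Obj_image: "Obj D = Po ` Obj G"
    and Mor_image: "Mor D = Pm ` Mor G"
    and Dom_image: "f \<in> Mor G \<Longrightarrow> Dom D (Pm f) = Po (Dom G f)"
    and Cod_image: "f \<in> Mor G \<Longrightarrow> Cod D (Pm f) = Po (Cod G f)"
    and Ide_image: "x \<in> Obj G \<Longrightarrow> Ide D (Po x) = Pm (Ide G x)"
    and Comp_image:
      "\<lbrakk>f \<in> Mor G; g \<in> Mor G; Dom G f = Cod G g\<rbrakk> \<Longrightarrow> Comp D (Pm f) (Pm g) = Pm (Comp G f g)"
    and lift_composable:
      "\<lbrakk>f \<in> Mor G; g \<in> Mor G; Dom D (Pm f) = Cod D (Pm g)\<rbrakk> \<Longrightarrow>
       \<exists>f' \<in> Mor G. Pm f' = Pm f \<and> Dom G f' = Cod G g"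

sublocale category_image \<subseteq> small_category G
  using category_source by unfold_locales

context category_image
begin

lemma MorE:
  assumes "m \<in> Mor D"
  obtains f where "f \<in> Mor G" "m = Pm f"
  using assms Mor_image by auto

lemma ObjE:
  assumes "a \<in> Obj D"
  obtains x where "x \<in> Obj G" "a = Po x"
  using assms Obj_image by auto

lemma composable_liftE:
  assumes "m \<in> Mor D" "g \<in> Mor G" "Dom D m = Cod D (Pm g)"
  obtains f where "f \<in> Mor G" "m = Pm f" "Dom G f = Cod G g"
  using assms lift_composable by (metis MorE)

lemma category_target: "category D"
proof -
  have "\<forall>m\<in>Mor D. Dom D m \<in> Obj D \<and> Cod D m \<in> Obj D"
    by (auto elim!: MorE simp: Dom_image Cod_image Obj_image dom_obj cod_obj)
  moreover have "\<forall>a\<in>Obj D. Ide D a \<in> Mor D \<and> Dom D (Ide D a) = a \<and> Cod D (Ide D a) = a"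
    by (auto elim!: ObjE simp: Ide_image Dom_image Cod_image Mor_image ide_mor dom_ide cod_ide)
  moreover have "\<forall>m\<in>Mor D. \<forall>n\<in>Mor D. Dom D m = Cod D n \<longrightarrow>
      Comp D m n \<in> Mor D \<and> Dom D (Comp D m n) = Dom D n \<and> Cod D (Comp D m n) = Cod D m"
  proof (intro ballI impI)
    fix m n assume m: "m \<in> Mor D" and n: "n \<in> Mor D" and mn: "Dom D m = Cod D n"
    obtain g where g: "g \<in> Mor G" "n = Pm g" using n by (rule MorE)
    obtain f where "f \<in> Mor G" "m = Pm f" "Dom G f = Cod G g"
      using composable_liftE[OF m g(1)] mn g by metis
    with g show "Comp D m n \<in> Mor D \<and> Dom D (Comp D m n) = Dom D n \<and> Cod D (Comp D m n) = Cod D m"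
      by (simp add: Comp_image Mor_image Dom_image Cod_image comp_mor dom_comp cod_comp)
  qed
  moreover have "\<forall>m\<in>Mor D. Comp D (Ide D (Cod D m)) m = m \<and> Comp D m (Ide D (Dom D m)) = m"
    by (auto elim!: MorE simp: Dom_image Cod_image Ide_image Comp_image dom_obj cod_obj
        ide_mor dom_ide cod_ide comp_ide_cod comp_ide_dom)
  moreover have "\<forall>m\<in>Mor D. \<forall>n\<in>Mor D. \<forall>p\<in>Mor D. Dom D m = Cod D n \<longrightarrow> Dom D n = Cod D p \<longrightarrow>
      Comp D (Comp D m n) p = Comp D m (Comp D n p)"
  proof (intro ballI impI)
    fix m n p assume m: "m \<in> Mor D" and n: "n \<in> Mor D" and p: "p \<in> Mor D"
      and mn: "Dom D m = Cod D n" and np: "Dom D n = Cod D p"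
    obtain h where h: "h \<in> Mor G" "p = Pm h" using p by (rule MorE)
    obtain g where g: "g \<in> Mor G" "n = Pm g" "Dom G g = Cod G h"
      using composable_liftE[OF n h(1)] np h by metis
    obtain f where f: "f \<in> Mor G" "m = Pm f" "Dom G f = Cod G g"
      using composable_liftE[OF m g(1)] mn g by metis
    show "Comp D (Comp D m n) p = Comp D m (Comp D n p)"
      using f g h by (simp add: Comp_image comp_mor dom_comp cod_comp comp_assoc)
  qed
  ultimately show ?thesis unfolding category_def by blast
qed

definition induced_obj :: "('o \<Rightarrow> 'q) \<Rightarrow> 'p \<Rightarrow> 'q" where
  "induced_obj Fo a = Fo (SOME x. x \<in> Obj G \<and> Po x = a)"

definition induced_mor :: "('m \<Rightarrow> 'r) \<Rightarrow> 'n \<Rightarrow> 'r" where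
  "induced_mor Fm m = Fm (SOME f. f \<in> Mor G \<and> Pm f = m)"

context
  fixes C :: "('q, 'r) cat" and Fo :: "'o \<Rightarrow> 'q" and Fm :: "'m \<Rightarrow> 'r"
  assumes "functor": "functor G C Fo Fm"
    and constant_on_fibres: "\<forall>f\<in>Mor G. \<forall>g\<in>Mor G. Pm f = Pm g \<longrightarrow> Fm f = Fm g"
begin

lemma induced_mor_image: "f \<in> Mor G \<Longrightarrow> induced_mor Fm (Pm f) = Fm f"
  unfolding induced_mor_def by (rule someI2[of _ f]) (use constant_on_fibres in blast)+

text \<open>Objects are recovered through their identities, so no separate condition on Fo
  is needed.\<close>
lemma induced_obj_image:
  assumes x: "x \<in> Obj G"
  shows "induced_obj Fo (Po x) = Fo x"
  unfolding induced_obj_def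
proof (rule someI2[of _ x])
  fix y assume y: "y \<in> Obj G \<and> Po y = Po x"
  then have "Pm (Ide G y) = Pm (Ide G x)"
    using Ide_image x by metis
  then have "Fm (Ide G y) = Fm (Ide G x)"
    using constant_on_fibres ide_mor x y by blast
  then have "Ide C (Fo y) = Ide C (Fo x)"
    using "functor" x y unfolding functor_def by metis
  then show "Fo y = Fo x"
    using "functor" x y unfolding functor_def category_def by metis
qed (use x in simp)

lemma induced_obj_unique:
  "\<lbrakk>\<forall>x\<in>Obj G. Fo' (Po x) = Fo x; a \<in> Obj D\<rbrakk> \<Longrightarrow> Fo' a = induced_obj Fo a"
  by (auto elim!: ObjE simp: induced_obj_image)

lemma induced_mor_unique:
  "\<lbrakk>\<forall>f\<in>Mor G. Fm' (Pm f) = Fm f; m \<in> Mor D\<rbrakk> \<Longrightarrow> Fm' m = induced_mor Fm m"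
  by (auto elim!: MorE simp: induced_mor_image)

lemma functor_induced: "functor D C (induced_obj Fo) (induced_mor Fm)"
proof -
  have C: "category C" using "functor" unfolding functor_def by simp
  have comp: "induced_mor Fm (Comp D m n) = Comp C (induced_mor Fm m) (induced_mor Fm n)"
    if m: "m \<in> Mor D" and n: "n \<in> Mor D" and mn: "Dom D m = Cod D n" for m n
  proof -
    obtain g where g: "g \<in> Mor G" "n = Pm g" using n by (rule MorE)
    obtain f where f: "f \<in> Mor G" "m = Pm f" "Dom G f = Cod G g"
      using composable_liftE[OF m g(1)] mn g by metis
    show ?thesis
      using f g "functor" unfolding functor_def
      by (simp add: Comp_image induced_mor_image comp_mor)
  qed
  show ?thesis
    unfolding functor_def
    using "functor" category_target C comp
    by (auto elim!: MorE ObjE simp: functor_def induced_obj_image induced_mor_image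
        Dom_image Cod_image Ide_image dom_obj cod_obj ide_mor)
qed

end

end

section \<open>Words of colours in a coloured groupoid\<close>

locale ic_mc_groupoid =
  fixes G :: "('o, 'm) cat" and lam :: "'m \<Rightarrow> 'c"
  assumes mc_groupoid: "mc_groupoid G lam"
    and inverse_compatible: "inverse_compatible G lam"

sublocale ic_mc_groupoid \<subseteq> small_groupoid G
  using mc_groupoid by unfold_locales (simp add: mc_groupoid_def)

context ic_mc_groupoid
begin

lemma color_factorization:
  "\<lbrakk>g \<in> Mor G; f1 \<in> Mor G; f2 \<in> Mor G; Dom G f1 = Cod G f2; lam g = lam (Comp G f1 f2)\<rbrakk> \<Longrightarrow>
   \<exists>g1\<in>Mor G. \<exists>g2\<in>Mor G. Dom G g1 = Cod G g2 \<and> g = Comp G g1 g2 \<and> lam g1 = lam f1 \<and> lam g2 = lam f2"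
  using mc_groupoid unfolding mc_groupoid_def mc_category_def by blast

lemma color_inv_mor:
  "\<lbrakk>f \<in> Mor G; g \<in> Mor G; lam f = lam g\<rbrakk> \<Longrightarrow> lam (inv_mor G f) = lam (inv_mor G g)"
  using inverse_compatible unfolding inverse_compatible_def by blast

lemma exists_dom_with_color:
  assumes x: "x \<in> Obj G" and k: "k \<in> Mor G" and e: "lam (Ide G x) = lam (Ide G (Dom G k))"
  shows "\<exists>k' \<in> Mor G. Dom G k' = x \<and> lam k' = lam k"
proof -
  have "lam (Ide G x) = lam (Comp G (inv_mor G k) k)"
    using e comp_inv_mor_left[OF k] by simp
  then obtain a b where ab: "a \<in> Mor G" "b \<in> Mor G" "Dom G a = Cod G b"
      "Ide G x = Comp G a b" "lam b = lam k"
    using color_factorization[OF ide_mor[OF x] inv_mor_mor[OF k] k] dom_inv_mor[OF k] by metis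
  have "Dom G b = x" using dom_comp[OF ab(1-3)] ab(4) dom_ide[OF x] by metis
  then show ?thesis using ab by blast
qed

lemma exists_cod_with_color:
  assumes x: "x \<in> Obj G" and k: "k \<in> Mor G" and e: "lam (Ide G x) = lam (Ide G (Cod G k))"
  shows "\<exists>k' \<in> Mor G. Cod G k' = x \<and> lam k' = lam k"
proof -
  obtain k' where k': "k' \<in> Mor G" "Dom G k' = x" "lam k' = lam (inv_mor G k)"
    using exists_dom_with_color[OF x inv_mor_mor[OF k]] e dom_inv_mor[OF k] by metis
  have "lam (inv_mor G k') = lam k"
    using color_inv_mor[OF k'(1) inv_mor_mor[OF k] k'(3)] inv_mor_inv_mor[OF k] by simp
  then show ?thesis using k' inv_mor_mor cod_inv_mor by metis
qed

text \<open>Factor g along f \<circ> 1 to get g = g1 g2 with lam g2 = lam (1 at Dom f), then factor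
  that identity along g2 \<circ> 1 as a b; a is the inverse of b, and inverse-compatibility
  carries the colour of b (an identity's colour) to that of a.\<close>
lemma color_ide_dom_eq:
  assumes f: "f \<in> Mor G" and g: "g \<in> Mor G" and e: "lam f = lam g"
  shows "lam (Ide G (Dom G f)) = lam (Ide G (Dom G g))"
proof -
  let ?x = "Dom G f"
  have x: "?x \<in> Obj G" using dom_obj[OF f] .
  obtain g1 g2 where g12: "g1 \<in> Mor G" "g2 \<in> Mor G" "Dom G g1 = Cod G g2" "g = Comp G g1 g2"
      "lam g2 = lam (Ide G ?x)"
    using color_factorization[OF g f ide_mor[OF x]] comp_ide_dom[OF f] e cod_ide[OF x] by metis
  let ?y = "Dom G g2"
  have y: "?y \<in> Obj G" and dom_g: "?y = Dom G g"
    using dom_obj[OF g12(2)] dom_comp[OF g12(1-3)] g12(4) by simp_all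
  obtain a b where ab: "a \<in> Mor G" "b \<in> Mor G" "Dom G a = Cod G b" "Ide G ?x = Comp G a b"
      "lam a = lam g2" "lam b = lam (Ide G ?y)"
    using color_factorization[OF ide_mor[OF x] g12(2) ide_mor[OF y]] comp_ide_dom[OF g12(2)]
      g12(5) cod_ide[OF y] by metis
  have "Dom G b = ?x" using dom_comp[OF ab(1-3)] ab(4) dom_ide[OF x] by metis
  then have "a = inv_mor G b" using left_inverse_eq_inv_mor[OF ab(1-3)] ab(4) by simp
  then have "lam a = lam (Ide G ?y)"
    using color_inv_mor[OF ab(2) ide_mor[OF y] ab(6)] inv_mor_ide[OF y] by simp
  then show ?thesis using ab(5) g12(5) dom_g by simp
qed

lemma color_ide_cod_eq:
  assumes f: "f \<in> Mor G" and g: "g \<in> Mor G" and e: "lam f = lam g"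
  shows "lam (Ide G (Cod G f)) = lam (Ide G (Cod G g))"
  using color_ide_dom_eq[OF inv_mor_mor[OF f] inv_mor_mor[OF g] color_inv_mor[OF f g e]]
  by (simp add: f g dom_inv_mor)

inductive realizes :: "'m \<Rightarrow> 'c list \<Rightarrow> bool" where
  single: "f \<in> Mor G \<Longrightarrow> realizes f [lam f]"
| Cons: "\<lbrakk>f \<in> Mor G; realizes g w; Dom G f = Cod G g\<rbrakk> \<Longrightarrow> realizes (Comp G f g) (lam f # w)"

lemma realizes_mor: "realizes h w \<Longrightarrow> h \<in> Mor G"
  by (induction rule: realizes.induct) (auto simp: comp_mor)

lemma realizes_singletonD: "realizes k [c] \<Longrightarrow> k \<in> Mor G \<and> lam k = c"
  by (cases rule: realizes.cases) (auto elim: realizes.cases)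

lemma realizes_ConsE:
  assumes "realizes k (c # w)" "w \<noteq> []"
  obtains f g where "k = Comp G f g" "f \<in> Mor G" "realizes g w" "Dom G f = Cod G g" "lam f = c"
  using assms by (cases rule: realizes.cases) auto

lemma realizes_recolor: "\<lbrakk>realizes h w; h' \<in> Mor G; lam h' = lam h\<rbrakk> \<Longrightarrow> realizes h' w"
proof (induction arbitrary: h' rule: realizes.induct)
  case (single f)
  then show ?case using realizes.single[of h'] by simp
next
  case (Cons f g w)
  obtain g1 g2 where "g1 \<in> Mor G" "g2 \<in> Mor G" "Dom G g1 = Cod G g2" "h' = Comp G g1 g2"
      "lam g1 = lam f" "lam g2 = lam g"
    using color_factorization[OF Cons.prems(1) Cons.hyps(1) realizes_mor[OF Cons.hyps(2)]
        Cons.hyps(3) Cons.prems(2)] by blast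
  then show ?case using realizes.Cons[of g1 g2 w] Cons.IH by simp
qed

lemma realizes_append:
  "\<lbrakk>realizes h w; realizes k v; Dom G h = Cod G k\<rbrakk> \<Longrightarrow> realizes (Comp G h k) (w @ v)"
proof (induction arbitrary: k v rule: realizes.induct)
  case (single f)
  then show ?case using realizes.Cons by simp
next
  case (Cons f g w)
  have g: "g \<in> Mor G" and k: "k \<in> Mor G" using realizes_mor Cons by blast+
  have gk: "Dom G g = Cod G k" using Cons dom_comp[OF Cons.hyps(1) g] by simp
  have "Comp G (Comp G f g) k = Comp G f (Comp G g k)"
    using comp_assoc[OF Cons.hyps(1) g k] Cons.hyps(3) gk by simp
  moreover have "realizes (Comp G g k) (w @ v)" using Cons.IH Cons.prems gk by simp
  ultimately show ?case
    using realizes.Cons[OF Cons.hyps(1)] cod_comp[OF g k gk] Cons.hyps(3) by simp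
qed

definition inv_color :: "'c \<Rightarrow> 'c" where
  "inv_color c = lam (inv_mor G (SOME f. f \<in> Mor G \<and> lam f = c))"

lemma inv_color: "f \<in> Mor G \<Longrightarrow> inv_color (lam f) = lam (inv_mor G f)"
  unfolding inv_color_def by (rule someI2[of _ f]) (auto intro: color_inv_mor)

lemma realizes_inv_mor: "realizes h w \<Longrightarrow> realizes (inv_mor G h) (rev (map inv_color w))"
proof (induction rule: realizes.induct)
  case (single f)
  then show ?case using realizes.single[OF inv_mor_mor] inv_color by simp
next
  case (Cons f g w)
  have g: "g \<in> Mor G" using realizes_mor Cons by blast
  have "realizes (Comp G (inv_mor G g) (inv_mor G f)) (rev (map inv_color w) @ [inv_color (lam f)])"
    using realizes_append[OF Cons.IH realizes.single[OF inv_mor_mor[OF Cons.hyps(1)]]]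
      inv_color[OF Cons.hyps(1)] dom_inv_mor[OF g] cod_inv_mor[OF Cons.hyps(1)] Cons.hyps(3)
    by simp
  then show ?case using inv_mor_comp[OF Cons.hyps(1) g Cons.hyps(3)] by simp
qed

lemma realizes_dom_color:
  "\<lbrakk>realizes h w; realizes k w\<rbrakk> \<Longrightarrow> lam (Ide G (Dom G h)) = lam (Ide G (Dom G k))"
proof (induction arbitrary: k rule: realizes.induct)
  case (single f)
  then show ?case using realizes_singletonD color_ide_dom_eq by metis
next
  case (Cons f g w)
  have g: "g \<in> Mor G" and "w \<noteq> []" using realizes_mor Cons by (auto elim: realizes.cases)
  then obtain f' g' where "k = Comp G f' g'" "f' \<in> Mor G" "realizes g' w" "Dom G f' = Cod G g'"
    using Cons.prems by (auto elim: realizes_ConsE)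
  then show ?case
    using Cons.IH[of g'] dom_comp[OF Cons.hyps(1) g Cons.hyps(3)] dom_comp realizes_mor by metis
qed

lemma realizes_cod_hd: "realizes h w \<Longrightarrow> \<exists>f \<in> Mor G. lam f = hd w \<and> Cod G h = Cod G f"
  by (induction rule: realizes.induct) (auto simp: cod_comp realizes_mor)

lemma realizes_cod_color:
  "\<lbrakk>realizes h w; realizes k w\<rbrakk> \<Longrightarrow> lam (Ide G (Cod G h)) = lam (Ide G (Cod G k))"
  using realizes_cod_hd color_ide_cod_eq by metis

lemma functor_realizes_eq:
  assumes F: "functor G C Fo Fm" and color: "\<forall>f\<in>Mor G. Fm f = gam (lam f)"
  shows "\<lbrakk>realizes h w; realizes k w\<rbrakk> \<Longrightarrow> Fm h = Fm k"
proof (induction arbitrary: k rule: realizes.induct)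
  case (single f)
  then show ?case using realizes_singletonD[of k "lam f"] color by simp
next
  case (Cons f g w)
  have "w \<noteq> []" using Cons.hyps(2) by (auto elim: realizes.cases)
  then obtain f' g' where k: "k = Comp G f' g'" "f' \<in> Mor G" "realizes g' w"
      "Dom G f' = Cod G g'" "lam f' = lam f"
    using Cons.prems by (auto elim: realizes_ConsE)
  have "Fm g = Fm g'" "Fm f = Fm f'" using Cons.IH k color Cons.hyps(1) by auto
  then show ?case
    using F k Cons.hyps realizes_mor unfolding functor_def by metis
qed

definition word_related :: "'c \<Rightarrow> 'c \<Rightarrow> bool" where
  "word_related c d \<longleftrightarrow> (\<exists>w f g. realizes f w \<and> realizes g w \<and> lam f = c \<and> lam g = d)"

lemma word_relatedE:
  assumes "word_related (lam f) (lam g)" "f \<in> Mor G" "g \<in> Mor G"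
  obtains w where "realizes f w" "realizes g w"
  using assms realizes_recolor unfolding word_related_def by metis

lemma word_related_refl: "f \<in> Mor G \<Longrightarrow> word_related (lam f) (lam f)"
  unfolding word_related_def using realizes.single by blast

lemma word_related_sym: "word_related c d \<Longrightarrow> word_related d c"
  unfolding word_related_def by blast

text \<open>If f, g realize w and g, h realize v, both f and h realize w v^-1 v: write
  f = (f k^-1) k with k of the colour of g starting where f starts, and h = (l l^-1) h
  with l of the colour of g ending where h ends.\<close>
lemma word_related_trans:
  assumes "word_related c d" "word_related d e"
  shows "word_related c e"
proof -
  obtain w f g where 1: "realizes f w" "realizes g w" "lam f = c" "lam g = d"
    using assms(1) unfolding word_related_def by blast
  obtain v g' h where 2: "realizes g' v" "realizes h v" "lam g' = d" "lam h = e"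
    using assms(2) unfolding word_related_def by blast
  have f: "f \<in> Mor G" and g: "g \<in> Mor G" and h: "h \<in> Mor G"
    using 1 2 realizes_mor by blast+
  have gv: "realizes g v" using realizes_recolor[OF 2(1) g] 1 2 by simp
  let ?u = "(w @ rev (map inv_color v)) @ v"
  obtain k where k: "k \<in> Mor G" "Dom G k = Dom G f" "lam k = lam g"
    using exists_dom_with_color[OF dom_obj[OF f] g] realizes_dom_color[OF 1(1,2)] by metis
  have kv: "realizes k v" using realizes_recolor[OF gv k(1)] k by simp
  note k' = inv_mor_mor[OF k(1)] dom_inv_mor[OF k(1)] cod_inv_mor[OF k(1)]
  have "realizes (Comp G (Comp G f (inv_mor G k)) k) ?u"
    using realizes_append[OF realizes_append[OF 1(1) realizes_inv_mor[OF kv]] kv]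
      k k' dom_comp[OF f k'(1)] by simp
  moreover have "Comp G (Comp G f (inv_mor G k)) k = f"
    using comp_assoc[OF f k'(1) k(1)] k k' comp_inv_mor_left[OF k(1)] comp_ide_dom[OF f] by simp
  ultimately have fu: "realizes f ?u" by simp
  obtain l where l: "l \<in> Mor G" "Cod G l = Cod G h" "lam l = lam g"
    using exists_cod_with_color[OF cod_obj[OF h] g] realizes_cod_color[OF 2(2) gv] by metis
  have lw: "realizes l w" and lv: "realizes l v"
    using realizes_recolor[OF 1(2) l(1)] realizes_recolor[OF gv l(1)] l by simp_all
  note l' = inv_mor_mor[OF l(1)] dom_inv_mor[OF l(1)] cod_inv_mor[OF l(1)]
  have "realizes (Comp G (Comp G l (inv_mor G l)) h) ?u"
    using realizes_append[OF realizes_append[OF lw realizes_inv_mor[OF lv]] 2(2)]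
      l l' dom_comp[OF l(1) l'(1)] by simp
  moreover have "Comp G (Comp G l (inv_mor G l)) h = h"
    using comp_inv_mor_right[OF l(1)] l comp_ide_cod[OF h] by simp
  ultimately have "realizes h ?u" by simp
  then show ?thesis unfolding word_related_def using fu 1 2 by blast
qed

lemma word_related_comp:
  assumes f: "f \<in> Mor G" "f' \<in> Mor G" and g: "g \<in> Mor G" "g' \<in> Mor G"
    and comp: "Dom G f = Cod G g" "Dom G f' = Cod G g'"
    and rel: "word_related (lam f) (lam f')" "word_related (lam g) (lam g')"
  shows "word_related (lam (Comp G f g)) (lam (Comp G f' g'))"
proof -
  obtain w where "realizes f w" "realizes f' w" using rel(1) f by (rule word_relatedE)
  moreover obtain v where "realizes g v" "realizes g' v" using rel(2) g by (rule word_relatedE)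
  ultimately show ?thesis
    unfolding word_related_def using realizes_append comp by blast
qed

lemma realizes_comp_list:
  "composable_seq G fs \<Longrightarrow>
   realizes (comp_list G fs) (map lam fs) \<and> Cod G (comp_list G fs) = Cod G (hd fs)"
proof (induction fs rule: induct_list012)
  case (3 f g gs)
  have "composable_seq G (g # gs)" and f: "f \<in> Mor G" and fg: "Dom G f = Cod G g"
    using "3.prems" unfolding composable_seq_def by (auto simp: All_less_Suc2)
  then have "realizes (comp_list G (g # gs)) (map lam (g # gs))"
    and "Cod G (comp_list G (g # gs)) = Cod G g" using "3.IH" by auto
  then show ?case using realizes.Cons[OF f] cod_comp[OF f realizes_mor] fg by simp
qed (auto simp: composable_seq_def intro: realizes.single)

lemma realizes_composable_seq:
  "realizes h w \<Longrightarrow> \<exists>fs. composable_seq G fs \<and> comp_list G fs = h \<and> map lam fs = w"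
proof (induction rule: realizes.induct)
  case (single f)
  then show ?case by (intro exI[of _ "[f]"]) (simp add: composable_seq_def)
next
  case (Cons f g w)
  then obtain fs where fs: "composable_seq G fs" "comp_list G fs = g" "map lam fs = w" by blast
  obtain g0 gs where fs_Cons: "fs = g0 # gs" using fs(1) unfolding composable_seq_def by (cases fs) auto
  have "Cod G g = Cod G g0" using realizes_comp_list[OF fs(1)] fs(2) fs_Cons by simp
  then have "composable_seq G (f # fs)"
    using fs(1) Cons.hyps fs_Cons unfolding composable_seq_def by (auto simp: All_less_Suc2)
  moreover have "comp_list G (f # fs) = Comp G f g" using fs_Cons fs(2) by simp
  ultimately show ?case using fs(3) by (intro exI[of _ "f # fs"]) simp
qed

section \<open>The groupoid U\<close>

lemma rel1_decl_eq: "rel1_decl G lam = {(c, d). word_related c d}"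
proof (intro set_eqI iffI)
  fix p assume "p \<in> rel1_decl G lam"
  then obtain fs gs where p: "p = (lam (comp_list G fs), lam (comp_list G gs))"
      "composable_seq G fs" "composable_seq G gs" "length fs = length gs"
      "\<forall>i<length fs. lam (fs ! i) = lam (gs ! i)"
    unfolding rel1_decl_def by blast
  have "map lam fs = map lam gs" using p(4,5) by (simp add: list_eq_iff_nth_eq)
  then show "p \<in> {(c, d). word_related c d}"
    using realizes_comp_list[OF p(2)] realizes_comp_list[OF p(3)] p(1)
    unfolding word_related_def by auto
next
  fix p assume "p \<in> {(c, d). word_related c d}"
  then obtain w f g where p: "p = (lam f, lam g)" "realizes f w" "realizes g w"
    unfolding word_related_def by blast
  obtain fs gs where fs: "composable_seq G fs" "comp_list G fs = f" "map lam fs = w"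
    and gs: "composable_seq G gs" "comp_list G gs = g" "map lam gs = w"
    using realizes_composable_seq p by metis
  have "length fs = length gs" using fs gs by (metis length_map)
  moreover have "\<forall>i<length fs. lam (fs ! i) = lam (gs ! i)"
    using fs gs calculation by (metis nth_map)
  ultimately show "p \<in> rel1_decl G lam" unfolding rel1_decl_def using fs gs p by blast
qed

text \<open>The declared relation is already an equivalence relation, so taking its closure
  adds nothing.\<close>
lemma rel1_eq: "rel1 G lam = {(c, d). word_related c d}"
proof -
  let ?R = "{(c, d). word_related c d}"
  have "?R\<inverse> = ?R" using word_related_sym by auto
  moreover have "trans ?R" unfolding trans_def using word_related_trans by blast
  moreover have "Id_on (I1 G lam) \<subseteq> ?R" unfolding I1_def using word_related_refl by auto
  ultimately show ?thesis unfolding rel1_def eq_closure_def rel1_decl_eq by auto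
qed

lemma lbar_mor_eq_iff:
  "\<lbrakk>f \<in> Mor G; g \<in> Mor G\<rbrakk> \<Longrightarrow> lbar_mor G lam f = lbar_mor G lam g \<longleftrightarrow> word_related (lam f) (lam g)"
  unfolding lbar_mor_def s1_def rel1_eq
  using word_related_refl word_related_sym word_related_trans by blast

lemma word_related_ide_dom:
  "\<lbrakk>f \<in> Mor G; g \<in> Mor G; word_related (lam f) (lam g)\<rbrakk> \<Longrightarrow>
   lam0 G lam (Dom G f) = lam0 G lam (Dom G g)"
  unfolding lam0_def by (metis word_relatedE realizes_dom_color)

lemma word_related_ide_cod:
  "\<lbrakk>f \<in> Mor G; g \<in> Mor G; word_related (lam f) (lam g)\<rbrakk> \<Longrightarrow>
   lam0 G lam (Cod G f) = lam0 G lam (Cod G g)"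
  unfolding lam0_def by (metis word_relatedE realizes_cod_color)

text \<open>Related morphisms have equal identity colours at their domains, so the object
  relation is trivial.\<close>
lemma rel0_eq: "rel0 G lam = Id_on (I0 G lam)"
proof -
  have "rel0_decl G lam \<subseteq> Id_on (I0 G lam)"
    unfolding rel0_decl_def I0_def
    using lbar_mor_eq_iff[unfolded lbar_mor_def] word_related_ide_dom dom_obj by fastforce
  then have "(rel0_decl G lam \<union> (rel0_decl G lam)\<inverse>)\<^sup>+ \<subseteq> Id_on (I0 G lam)"
    by (metis Un_absorb converse_Id_on converse_mono trancl_id trancl_mono_subset trans_Id_on
        sup.mono)
  then show ?thesis unfolding rel0_def eq_closure_def by blast
qed

lemma lbar_obj_eq: "x \<in> Obj G \<Longrightarrow> lbar_obj G lam x = {lam0 G lam x}"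
  unfolding lbar_obj_def s0_def rel0_eq I0_def by auto

lemma lbar_obj_eq_iff:
  "\<lbrakk>x \<in> Obj G; y \<in> Obj G\<rbrakk> \<Longrightarrow> lbar_obj G lam x = lbar_obj G lam y \<longleftrightarrow> lam0 G lam x = lam0 G lam y"
  by (simp add: lbar_obj_eq)

lemma Mor_U: "Mor (U G lam) = lbar_mor G lam ` Mor G"
  unfolding U_def quotient_def lbar_mor_def s1_def I1_def by auto

lemma Obj_U: "Obj (U G lam) = lbar_obj G lam ` Obj G"
  unfolding U_def quotient_def rel0_eq I0_def by (auto simp: lbar_obj_eq)

lemma Dom_U: "f \<in> Mor G \<Longrightarrow> Dom (U G lam) (lbar_mor G lam f) = lbar_obj G lam (Dom G f)"
  unfolding U_def cat.select_convs
  by (rule someI2[of _ f]) (auto simp: lbar_mor_eq_iff lbar_obj_eq_iff dom_obj word_related_ide_dom)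

lemma Cod_U: "f \<in> Mor G \<Longrightarrow> Cod (U G lam) (lbar_mor G lam f) = lbar_obj G lam (Cod G f)"
  unfolding U_def cat.select_convs
  by (rule someI2[of _ f]) (auto simp: lbar_mor_eq_iff lbar_obj_eq_iff cod_obj word_related_ide_cod)

lemma Ide_U: "x \<in> Obj G \<Longrightarrow> Ide (U G lam) (lbar_obj G lam x) = lbar_mor G lam (Ide G x)"
  unfolding U_def cat.select_convs
  by (rule someI2[of _ x]) (auto simp: lbar_obj_eq_iff lam0_def lbar_mor_def)

lemma Comp_U:
  assumes f: "f \<in> Mor G" and g: "g \<in> Mor G" and fg: "Dom G f = Cod G g"
  shows "Comp (U G lam) (lbar_mor G lam f) (lbar_mor G lam g) = lbar_mor G lam (Comp G f g)"
proof -
  let ?P = "\<lambda>(f', g'). f' \<in> Mor G \<and> g' \<in> Mor G \<and> Dom G f' = Cod G g' \<and>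
      lbar_mor G lam f' = lbar_mor G lam f \<and> lbar_mor G lam g' = lbar_mor G lam g"
  have "?P (SOME p. ?P p)" by (rule someI[of _ "(f, g)"]) (use f g fg in simp)
  moreover obtain f' g' where "(SOME p. ?P p) = (f', g')" by fastforce
  ultimately have "lbar_mor G lam (Comp G f' g') = lbar_mor G lam (Comp G f g)"
    "Comp (U G lam) (lbar_mor G lam f) (lbar_mor G lam g) = lbar_mor G lam (Comp G f' g')"
    using f g fg word_related_comp by (auto simp: lbar_mor_eq_iff comp_mor U_def)
  then show ?thesis by simp
qed

lemma lift_composable_U:
  assumes f: "f \<in> Mor G" and g: "g \<in> Mor G"
    and fg: "Dom (U G lam) (lbar_mor G lam f) = Cod (U G lam) (lbar_mor G lam g)"
  shows "\<exists>f' \<in> Mor G. lbar_mor G lam f' = lbar_mor G lam f \<and> Dom G f' = Cod G g"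
proof -
  have "lam (Ide G (Cod G g)) = lam (Ide G (Dom G f))"
    using fg Dom_U[OF f] Cod_U[OF g] lbar_obj_eq_iff dom_obj[OF f] cod_obj[OF g]
    unfolding lam0_def by metis
  then obtain f' where "f' \<in> Mor G" "Dom G f' = Cod G g" "lam f' = lam f"
    using exists_dom_with_color[OF cod_obj[OF g] f] by blast
  then show ?thesis unfolding lbar_mor_def by metis
qed

lemma mc_functor_constant_on_fibres:
  assumes "mc_functor G lam C id Fo Fm gam"
  shows "\<forall>f\<in>Mor G. \<forall>g\<in>Mor G. lbar_mor G lam f = lbar_mor G lam g \<longrightarrow> Fm f = Fm g"
proof (intro ballI impI)
  fix f g assume "f \<in> Mor G" "g \<in> Mor G" "lbar_mor G lam f = lbar_mor G lam g"
  then obtain w where "realizes f w" "realizes g w"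
    using word_relatedE lbar_mor_eq_iff by metis
  moreover have "functor G C Fo Fm" "\<forall>f\<in>Mor G. Fm f = gam (lam f)"
    using assms unfolding mc_functor_def by auto
  ultimately show "Fm f = Fm g" using functor_realizes_eq by blast
qed

end

sublocale ic_mc_groupoid \<subseteq> U: category_image G "U G lam" "lbar_obj G lam" "lbar_mor G lam"
  by unfold_locales
    (simp_all add: category Obj_U Mor_U Dom_U Cod_U Ide_U Comp_U lift_composable_U)

theorem mainTheorem2:
  fixes G :: "('o, 'm) cat" and lam :: "'m \<Rightarrow> 'c"
    and C :: "('p, 'n) cat" and Fo :: "'o \<Rightarrow> 'p" and Fm :: "'m \<Rightarrow> 'n" and gam :: "'c \<Rightarrow> 'n"
  assumes "mc_groupoid G lam"
    and "inverse_compatible G lam"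
    and "category C"
    and "mc_functor G lam C id Fo Fm gam"
  shows "\<exists>Fo' Fm' gam'.
     mc_functor (U G lam) id C id Fo' Fm' gam' \<and>
     (\<forall>x\<in>Obj G. Fo' (lbar_obj G lam x) = Fo x) \<and>
     (\<forall>f\<in>Mor G. Fm' (lbar_mor G lam f) = Fm f) \<and>
     (\<forall>c\<in>I1 G lam. gam' (s1 G lam c) = gam c) \<and>
     (\<forall>Fo'' Fm'' gam''.
        mc_functor (U G lam) id C id Fo'' Fm'' gam'' \<and>
        (\<forall>x\<in>Obj G. Fo'' (lbar_obj G lam x) = Fo x) \<and>
        (\<forall>f\<in>Mor G. Fm'' (lbar_mor G lam f) = Fm f) \<and>
        (\<forall>c\<in>I1 G lam. gam'' (s1 G lam c) = gam c) \<longrightarrow>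
        (\<forall>a\<in>Obj (U G lam). Fo'' a = Fo' a) \<and>
        (\<forall>m\<in>Mor (U G lam). Fm'' m = Fm' m \<and> gam'' m = gam' m))"
proof -
  interpret ic_mc_groupoid G lam using assms(1,2) by unfold_locales
  have F: "functor G C Fo Fm" and color: "\<forall>f\<in>Mor G. Fm f = gam (lam f)"
    using assms(4) unfolding mc_functor_def by auto
  note fibres = mc_functor_constant_on_fibres[OF assms(4)]
  let ?Fo' = "U.induced_obj Fo" and ?Fm' = "U.induced_mor Fm"
  have "mc_functor (U G lam) id C id ?Fo' ?Fm' ?Fm'"
    unfolding mc_functor_def
    using mc_category_discrete[OF U.category_target] mc_category_discrete[OF assms(3)]
      U.functor_induced[OF F fibres] by simp
  moreover have "\<forall>x\<in>Obj G. ?Fo' (lbar_obj G lam x) = Fo x"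
    and "\<forall>f\<in>Mor G. ?Fm' (lbar_mor G lam f) = Fm f"
    using U.induced_obj_image[OF F fibres] U.induced_mor_image[OF F fibres] by simp_all
  moreover have "\<forall>c\<in>I1 G lam. ?Fm' (s1 G lam c) = gam c"
    using U.induced_mor_image[OF F fibres] color unfolding I1_def lbar_mor_def by auto
  moreover have "(\<forall>a\<in>Obj (U G lam). Fo'' a = ?Fo' a) \<and>
      (\<forall>m\<in>Mor (U G lam). Fm'' m = ?Fm' m \<and> gam'' m = ?Fm' m)"
    if "mc_functor (U G lam) id C id Fo'' Fm'' gam''"
      "\<forall>x\<in>Obj G. Fo'' (lbar_obj G lam x) = Fo x" "\<forall>f\<in>Mor G. Fm'' (lbar_mor G lam f) = Fm f"
    for Fo'' Fm'' gam''
    using that U.induced_obj_unique[OF F fibres] U.induced_mor_unique[OF F fibres]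
    unfolding mc_functor_def by auto
  ultimately show ?thesis by (intro exI[of _ ?Fo'] exI[of _ ?Fm'] exI[of _ ?Fm']) blast
qed

end
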